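(* Let $S=\{s_1,\dots,s_{k_1}\}$ and $T=\{t_1,\dots,t_{k_2}\}$ be nonempty sets of positive integers and $d=\gcd\{s+t: s\in S,t\in T\}$. Then there exist integers $a_1,\dots,a_{k_1},b_1,\dots,b_{k_2}$ such that $$d=\sum_{i=1}^{k_1}a_is_i-\sum_{i=1}^{k_2}b_it_i\quad\text{and}\quad\sum_{i=1}^{k_1}a_i+\sum_{i=1}^{k_2}b_i=0.$$ *)

theory Defs
  imports Main
begin

end

theory Submission
  imports Defs "HOL-Computational_Algebra.Euclidean_Algorithm"
begin

text \<open>By Bezout, d is an integer combination \<open>\<Sum> c(s,t) (s + t)\<close> of the pairwise sums.
  Collecting terms, s receives the coefficient \<open>a s = \<Sum>\<^sub>t c(s,t)\<close> and t the coefficient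
  \<open>-b t\<close> with \<open>b t = - \<Sum>\<^sub>s c(s,t)\<close>; then \<open>\<Sum> a\<close> and \<open>\<Sum> b\<close> are the same double sum
  with opposite signs.\<close>

lemma Gcd_image_linear_combination:
  fixes f :: "'a \<Rightarrow> 'b :: euclidean_ring_gcd"
  assumes "finite P"
  shows "\<exists>c. Gcd (f ` P) = (\<Sum>p\<in>P. c p * f p)"
  using assms
proof (induction P rule: finite_induct)
  case empty
  then show ?case by simp
next
  case (insert x P)
  then obtain c where c: "Gcd (f ` P) = (\<Sum>p\<in>P. c p * f p)" by blast
  obtain u v where uv: "u * f x + v * Gcd (f ` P) = gcd (f x) (Gcd (f ` P))"
    using bezout_coefficients_fst_snd by blast
  define c' where "c' = (\<lambda>p. if p = x then u else v * c p)"
  have "(\<Sum>p\<in>insert x P. c' p * f p) = u * f x + (\<Sum>p\<in>P. v * (c p * f p))"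
    using insert by (auto simp: c'_def intro!: sum.cong)
  also have "\<dots> = Gcd (f ` insert x P)"
    using uv by (simp add: c sum_distrib_left Gcd_insert)
  finally show ?case by metis
qed

lemma sum_product_mult_add:
  fixes c :: "'a \<times> 'a \<Rightarrow> 'b :: comm_semiring_0" and g :: "'a \<Rightarrow> 'b"
  shows "(\<Sum>(s, t)\<in>S \<times> T. c (s, t) * (g s + g t)) =
         (\<Sum>s\<in>S. (\<Sum>t\<in>T. c (s, t)) * g s) + (\<Sum>t\<in>T. (\<Sum>s\<in>S. c (s, t)) * g t)"
proof -
  have "(\<Sum>(s, t)\<in>S \<times> T. c (s, t) * (g s + g t)) =
        (\<Sum>s\<in>S. \<Sum>t\<in>T. c (s, t) * g s) + (\<Sum>t\<in>T. \<Sum>s\<in>S. c (s, t) * g t)"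
    by (simp add: sum.cartesian_product [symmetric] distrib_left sum.distrib sum.swap [of _ T S])
  then show ?thesis by (simp add: sum_distrib_right)
qed

theorem lemma4p1:
  fixes S T :: "int set"
  assumes "finite S" and "S \<noteq> {}" and "\<forall>s\<in>S. s > 0"
      and "finite T" and "T \<noteq> {}" and "\<forall>t\<in>T. t > 0"
      and "d = Gcd {s + t | s t. s \<in> S \<and> t \<in> T}"
  shows "\<exists>a b :: int \<Rightarrow> int.
           d = (\<Sum>s\<in>S. a s * s) - (\<Sum>t\<in>T. b t * t) \<and>
           (\<Sum>s\<in>S. a s) + (\<Sum>t\<in>T. b t) = 0"
proof -
  have "{s + t | s t. s \<in> S \<and> t \<in> T} = (\<lambda>(s, t). s + t) ` (S \<times> T)" by auto
  then obtain c where "d = (\<Sum>(s, t)\<in>S \<times> T. c (s, t) * (s + t))"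
    using Gcd_image_linear_combination [of "S \<times> T" "\<lambda>(s, t). s + t"] assms(1,4,7)
    by (auto simp: case_prod_unfold)
  also have "\<dots> = (\<Sum>s\<in>S. (\<Sum>t\<in>T. c (s, t)) * s) - (\<Sum>t\<in>T. (- (\<Sum>s\<in>S. c (s, t))) * t)"
    using sum_product_mult_add [of c id S T] by (simp add: sum_negf)
  finally show ?thesis
    by (intro exI [of _ "\<lambda>s. \<Sum>t\<in>T. c (s, t)"] exI [of _ "\<lambda>t. - (\<Sum>s\<in>S. c (s, t))"])
      (simp add: sum_negf sum.swap [of _ S T])
qed

end
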